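(* Let $\mathfrak k$ be a commutative field, $\mathfrak R=\mathfrak k[x_1,\dots,x_m]_0$ and $\bar{\mathfrak R}=\mathfrak k[x_1,\dots,x_m]\subset\mathfrak R$. Let $I$ be an ideal of $\mathfrak R$ and $\bar I=I\cap\bar{\mathfrak R}$. The injection $\lambda:\bar{\mathfrak R}\hookrightarrow\mathfrak R$ induces an injection of chain-complexes $\lambda:\mathrm{Ksz}_{\bar{\mathfrak R}}(\bar{\mathfrak R}/\bar I)\hookrightarrow\mathrm{Ksz}_{\mathfrak R}(\mathfrak R/I)$, which in turn induces an isomorphism $H_*(\mathrm{Ksz}_{\bar{\mathfrak R}}(\bar{\mathfrak R}/\bar I))\cong H_*(\mathrm{Ksz}_{\mathfrak R}(\mathfrak R/I))$.
   Context: $\mathfrak R$ is the polynomial ring localized at $0\in\mathfrak k^m$ (quotients $P/Q$ with $Q(0)\ne0$). For a ring $S\in\{\bar{\mathfrak R},\mathfrak R\}$ and an $S$-module $M$, the Koszul complex $\mathrm{Ksz}_S(M)$ has $\mathrm{Ksz}_n(M)=M\otimes_{\mathfrak k}\wedge^nV$, $V$ the $\mathfrak k$-vector space with basis $dx_1,\dots,dx_m$, and differential $d(\alpha\,dx_{i_1}\cdots dx_{i_n})=\sum_j(-1)^{j-1}\alpha x_{i_j}\,dx_{i_1}\cdots\widehat{dx_{i_j}}\cdots dx_{i_n}$. *)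

theory Defs
  imports "HOL-Library.Poly_Mapping" "HOL-Computational_Algebra.Fraction_Field"
begin

text \<open>Polynomials k[x_v : v in 'v] : finitely supported maps from monomials
  (exponent vectors 'v =>0 nat) to coefficients.\<close>
type_synonym ('v, 'k) mpoly = "('v \<Rightarrow>\<^sub>0 nat) \<Rightarrow>\<^sub>0 'k"

definition Xvar :: "'v \<Rightarrow> ('v, 'k::zero_neq_one) mpoly" where
  "Xvar i = Poly_Mapping.single (Poly_Mapping.single i 1) 1"

definition eval0 :: "('v, 'k::zero) mpoly \<Rightarrow> 'k" where
  "eval0 p = Poly_Mapping.lookup p 0"

definition locR :: "('v::linorder, 'k::field) mpoly fract set" where
  "locR = {Fract p q | p q. eval0 q \<noteq> 0}"

definition lam :: "('v::linorder, 'k::field) mpoly \<Rightarrow> ('v, 'k) mpoly fract" where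
  "lam p = Fract p 1"

definition ideal_of :: "'a::comm_ring_1 set \<Rightarrow> 'a set \<Rightarrow> bool" where
  "ideal_of S I \<longleftrightarrow> I \<subseteq> S \<and> 0 \<in> I \<and> (\<forall>a\<in>I. \<forall>b\<in>I. a + b \<in> I)
     \<and> (\<forall>r\<in>S. \<forall>a\<in>I. r * a \<in> I)"

text \<open>Koszul complex in coordinates: an element of M (x) wedge^n V is written as
  sum_{|T| = n} c(T) dx_T (dx_T the increasing wedge product), c : n-subsets -> M.
  The differential of the paper gives the coefficient of dx_T in d c as below,
  the sign being (-1)^(j-1) where i is the j-th element of T u {i}.\<close>
definition kdiff :: "('v::{finite,linorder} \<Rightarrow> 'a::comm_ring_1) \<Rightarrow> ('v set \<Rightarrow> 'a) \<Rightarrow> 'v set \<Rightarrow> 'a" where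
  "kdiff x c T = (\<Sum>i\<in>UNIV - T. (-1) ^ card {j\<in>T. j < i} * x i * c (insert i T))"

text \<open>Degree-n chains of Ksz_S(S/I), given by representatives in S (supported on n-subsets).\<close>
definition kchain :: "'a::comm_ring_1 set \<Rightarrow> nat \<Rightarrow> ('v set \<Rightarrow> 'a) \<Rightarrow> bool" where
  "kchain S n c \<longleftrightarrow> (\<forall>T. (card T = n \<longrightarrow> c T \<in> S) \<and> (card T \<noteq> n \<longrightarrow> c T = 0))"

definition kcycle :: "'a::comm_ring_1 set \<Rightarrow> 'a set \<Rightarrow> ('v::{finite,linorder} \<Rightarrow> 'a) \<Rightarrow> nat \<Rightarrow> ('v set \<Rightarrow> 'a) \<Rightarrow> bool" where
  "kcycle S I x n z \<longleftrightarrow> kchain S n z \<and> (\<forall>T. kdiff x z T \<in> I)"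

definition kboundary :: "'a::comm_ring_1 set \<Rightarrow> 'a set \<Rightarrow> ('v::{finite,linorder} \<Rightarrow> 'a) \<Rightarrow> nat \<Rightarrow> ('v set \<Rightarrow> 'a) \<Rightarrow> bool" where
  "kboundary S I x n z \<longleftrightarrow> (\<exists>w. kchain S (Suc n) w \<and> (\<forall>T. z T - kdiff x w T \<in> I))"

end

theory Submission
  imports Defs
begin

text \<open>Multiplication by a variable x_i acts as zero on the homology of a Koszul complex:
  with e_i the exterior multiplication by dx_i one has d e_i + e_i d = x_i.
  Hence p z is a boundary for every cycle z and every polynomial p vanishing at 0, i.e. z is
  homologous to Q z whenever Q(0) = 1. Since finitely many elements of k[x]_0 have a common
  denominator Q with Q(0) = 1, every cycle over k[x]_0 is homologous to one with polynomial
  coefficients (surjectivity), and if a polynomial cycle z bounds over k[x]_0 then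
  Q z bounds over k[x] for such a Q, and so does z (injectivity).\<close>

lemma poly_mapping_single_add_induct [case_names zero single add]:
  fixes p :: "'a \<Rightarrow>\<^sub>0 'b::comm_monoid_add"
  assumes "P 0" "\<And>k a. P (Poly_Mapping.single k a)" "\<And>p q. P p \<Longrightarrow> P q \<Longrightarrow> P (p + q)"
  shows "P p"
proof (induction p rule: update_induct)
  case const then show ?case using assms by simp
next
  case (update f a b)
  have "Poly_Mapping.update a b f = f + Poly_Mapping.single a b"
    using update(1)
    by (intro poly_mapping_eqI) (auto simp: lookup_update lookup_add lookup_single in_keys_iff when_def)
  then show ?case using assms update by simp
qed

lemma eval0_zero: "eval0 0 = 0"
  by (simp add: eval0_def)

lemma eval0_one: "eval0 1 = 1"
  by (simp add: eval0_def)

lemma eval0_add: "eval0 (p + q) = eval0 p + eval0 q"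
  by (simp add: eval0_def lookup_add)

lemma eval0_single: "eval0 (Poly_Mapping.single k a) = (if k = 0 then a else 0)"
  by (simp add: eval0_def lookup_single when_def)

lemma add_poly_mapping_eq_0_iff: "(k::'v \<Rightarrow>\<^sub>0 nat) + l = 0 \<longleftrightarrow> k = 0 \<and> l = 0"
proof
  assume h: "k + l = 0"
  have "Poly_Mapping.lookup k v = 0 \<and> Poly_Mapping.lookup l v = 0" for v
    using arg_cong[OF h, of "\<lambda>f. Poly_Mapping.lookup f v"] by (simp add: lookup_add)
  then show "k = 0 \<and> l = 0" by (auto intro: poly_mapping_eqI)
qed simp

lemma eval0_mult: "eval0 ((p::('v,'k::comm_ring_1) mpoly) * q) = eval0 p * eval0 q"
proof (induction p rule: poly_mapping_single_add_induct)
  case zero then show ?case by (simp add: eval0_zero)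
next
  case (single k a)
  show ?case
  proof (induction q rule: poly_mapping_single_add_induct)
    case zero then show ?case by (simp add: eval0_zero)
  next
    case (single l b) then show ?case by (auto simp: mult_single eval0_single add_poly_mapping_eq_0_iff)
  next
    case (add p q) then show ?case by (simp add: distrib_left eval0_add)
  qed
next
  case (add p1 p2) then show ?case by (simp add: distrib_right eval0_add)
qed

lemma eval0_prod: "eval0 (prod (f::_ \<Rightarrow> ('v,'k::comm_ring_1) mpoly) A) = (\<Prod>a\<in>A. eval0 (f a))"
  by (induction A rule: infinite_finite_induct) (auto simp: eval0_one eval0_mult)

lemma Xvar_mult_single:
  assumes "Poly_Mapping.lookup k i \<noteq> 0"
  shows "Xvar i * Poly_Mapping.single (k - Poly_Mapping.single i 1) a
    = (Poly_Mapping.single k a :: ('v, 'k::comm_ring_1) mpoly)"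
proof -
  have "k = Poly_Mapping.single i 1 + (k - Poly_Mapping.single i 1)"
    using assms by (intro poly_mapping_eqI) (auto simp: lookup_add lookup_minus lookup_single when_def)
  then show ?thesis unfolding Xvar_def mult_single by (metis mult_1)
qed

subsection \<open>The Koszul differential and the null-homotopy of x_i\<close>

definition ksgn :: "'v::linorder \<Rightarrow> 'v set \<Rightarrow> 'a::comm_ring_1" where
  "ksgn i T = (-1) ^ card {j\<in>T. j < i}"

text \<open>In coordinates, wedge i c is the exterior product dx_i \<and> c.\<close>
definition wedge :: "'v::linorder \<Rightarrow> ('v set \<Rightarrow> 'a::comm_ring_1) \<Rightarrow> 'v set \<Rightarrow> 'a" where
  "wedge i c T = (if i \<in> T then ksgn i T * c (T - {i}) else 0)"

lemma kdiff_ksgn: "kdiff x c T = (\<Sum>k\<in>UNIV - T. ksgn k T * x k * c (insert k T))"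
  by (simp add: kdiff_def ksgn_def)

lemma ksgn_mult_self: "ksgn i T * ksgn i T = (1::'a::comm_ring_1)"
  by (simp add: ksgn_def flip: power_add)

lemma ksgn_insert:
  assumes "finite T" "k \<notin> T"
  shows "ksgn i (insert k T) = ksgn i T * (if k < i then -1 else (1::'a::comm_ring_1))"
proof -
  have "{j\<in>insert k T. j < i} = (if k < i then insert k {j\<in>T. j < i} else {j\<in>T. j < i})"
    by auto
  moreover have "finite {j\<in>T. j < i}"
    using assms(1) by simp
  ultimately show ?thesis using assms by (simp add: ksgn_def)
qed

lemma kdiff_add: "kdiff x (\<lambda>T. a T + b T) T = kdiff x a T + kdiff x b T"
  by (simp add: kdiff_def distrib_left sum.distrib)

lemma kdiff_mult_left: "kdiff x (\<lambda>T. r * a T) T = r * kdiff x a T"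
  by (simp add: kdiff_def sum_distrib_left mult_ac)

lemma kdiff_wedge_add_wedge_kdiff:
  fixes x :: "'v::{finite,linorder} \<Rightarrow> 'a::comm_ring_1"
  shows "kdiff x (wedge i c) T + wedge i (kdiff x c) T = x i * c T"
proof (cases "i \<in> T")
  case False
  have "kdiff x (wedge i c) T = ksgn i T * x i * wedge i c (insert i T)
      + (\<Sum>k\<in>UNIV - T - {i}. ksgn k T * x k * wedge i c (insert k T))"
    unfolding kdiff_ksgn using False by (subst sum.remove[of _ i]) auto
  also have "(\<Sum>k\<in>UNIV - T - {i}. ksgn k T * x k * wedge i c (insert k T)) = 0"
    using False by (intro sum.neutral) (auto simp: wedge_def)
  also have "wedge i c (insert i T) = ksgn i T * c T"
    using False by (simp add: wedge_def ksgn_insert)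
  finally have "kdiff x (wedge i c) T = (ksgn i T * ksgn i T) * x i * c T"
    by (simp add: mult_ac)
  moreover have "wedge i (kdiff x c) T = 0"
    using False by (simp add: wedge_def)
  ultimately show ?thesis by (simp add: ksgn_mult_self)
next
  case True
  define T' where "T' = T - {i}"
  have iT': "i \<notin> T'" and TT': "T = insert i T'"
    using True by (auto simp: T'_def)
  have ksgn_i: "ksgn i T' = (ksgn i T :: 'a)"
    unfolding TT' using iT' by (simp add: ksgn_insert)
  have ksgn_swap: "ksgn k T * ksgn i (insert k T) = - (ksgn i T * ksgn k T' :: 'a)" if "k \<notin> T" for k
  proof -
    have "k \<notin> T'" "k \<noteq> i" using that TT' by auto
    moreover have "ksgn k T = ksgn k T' * (if i < k then -1 else (1::'a))"
      unfolding TT' using iT' by (simp add: ksgn_insert)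
    ultimately show ?thesis
      using that by (cases "k < i") (auto simp: ksgn_insert)
  qed
  have "UNIV - T' = insert i (UNIV - T)"
    using TT' iT' by auto
  then have "wedge i (kdiff x c) T
      = ksgn i T * (ksgn i T' * x i * c (insert i T'))
        + (\<Sum>k\<in>UNIV - T. ksgn i T * ksgn k T' * x k * c (insert k T'))"
    using True by (simp add: wedge_def kdiff_ksgn T'_def[symmetric] distrib_left sum_distrib_left mult.assoc)
  also have "ksgn i T * (ksgn i T' * x i * c (insert i T')) = x i * c T"
    using ksgn_i TT' by (simp add: ksgn_mult_self flip: mult.assoc)
  finally have wedge_kdiff: "wedge i (kdiff x c) T
      = x i * c T + (\<Sum>k\<in>UNIV - T. ksgn i T * ksgn k T' * x k * c (insert k T'))" .
  have "kdiff x (wedge i c) T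
      = (\<Sum>k\<in>UNIV - T. (ksgn k T * ksgn i (insert k T)) * x k * c (insert k T'))"
    unfolding kdiff_ksgn
  proof (intro sum.cong refl)
    fix k assume "k \<in> UNIV - T"
    then have "insert k T - {i} = insert k T'"
      using True by (auto simp: T'_def)
    then show "ksgn k T * x k * wedge i c (insert k T)
        = (ksgn k T * ksgn i (insert k T)) * x k * c (insert k T')"
      using True \<open>k \<in> UNIV - T\<close> by (simp add: wedge_def mult_ac)
  qed
  also have "\<dots> = - (\<Sum>k\<in>UNIV - T. ksgn i T * ksgn k T' * x k * c (insert k T'))"
    by (simp add: ksgn_swap flip: sum_negf)
  finally show ?thesis
    using wedge_kdiff by simp
qed

locale koszul_complex =
  fixes S :: "'a::comm_ring_1 set" and I :: "'a set" and x :: "'v::{finite,linorder} \<Rightarrow> 'a"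
  assumes zero_in_S: "0 \<in> S" and one_in_S: "1 \<in> S" and minus_one_in_S: "-1 \<in> S"
    and add_in_S: "a \<in> S \<Longrightarrow> b \<in> S \<Longrightarrow> a + b \<in> S"
    and mult_in_S: "a \<in> S \<Longrightarrow> b \<in> S \<Longrightarrow> a * b \<in> S"
    and ideal: "ideal_of S I"
begin

lemma zero_in_I: "0 \<in> I"
  using ideal by (simp add: ideal_of_def)

lemma add_in_I: "a \<in> I \<Longrightarrow> b \<in> I \<Longrightarrow> a + b \<in> I"
  using ideal by (simp add: ideal_of_def)

lemma mult_in_I: "r \<in> S \<Longrightarrow> a \<in> I \<Longrightarrow> r * a \<in> I"
  using ideal by (simp add: ideal_of_def)

lemma ksgn_in_S: "ksgn i T \<in> S"
proof -
  have "(-1::'a) ^ k \<in> S" for k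
    using mult_in_S[OF minus_one_in_S] by (induction k) (auto simp: one_in_S)
  then show ?thesis by (simp add: ksgn_def)
qed

lemma kchain_in_S: "kchain S n c \<Longrightarrow> c T \<in> S"
  using zero_in_S by (cases "card T = n") (auto simp: kchain_def)

lemma kboundary_zero: "kboundary S I x n (\<lambda>T. 0)"
proof -
  have "kchain S (Suc n) (\<lambda>T. 0)"
    by (simp add: kchain_def zero_in_S)
  moreover have "0 - kdiff x (\<lambda>T. 0) T \<in> I" for T
    by (simp add: kdiff_def zero_in_I)
  ultimately show ?thesis unfolding kboundary_def by blast
qed

lemma kboundary_add:
  assumes "kboundary S I x n a" "kboundary S I x n b"
  shows "kboundary S I x n (\<lambda>T. a T + b T)"
proof -
  obtain v w where v: "kchain S (Suc n) v" "\<And>T. a T - kdiff x v T \<in> I"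
    and w: "kchain S (Suc n) w" "\<And>T. b T - kdiff x w T \<in> I"
    using assms by (auto simp: kboundary_def)
  have "kchain S (Suc n) (\<lambda>T. v T + w T)"
    using v(1) w(1) by (auto simp: kchain_def intro: add_in_S)
  moreover have "a T + b T - kdiff x (\<lambda>T. v T + w T) T \<in> I" for T
    using add_in_I[OF v(2) w(2)] by (simp add: kdiff_add algebra_simps)
  ultimately show ?thesis unfolding kboundary_def by blast
qed

lemma kboundary_mult_left:
  assumes "kboundary S I x n a" "r \<in> S"
  shows "kboundary S I x n (\<lambda>T. r * a T)"
proof -
  obtain w where w: "kchain S (Suc n) w" "\<And>T. a T - kdiff x w T \<in> I"
    using assms(1) by (auto simp: kboundary_def)
  have "kchain S (Suc n) (\<lambda>T. r * w T)"
    using w(1) assms(2) by (auto simp: kchain_def intro: mult_in_S)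
  moreover have "r * a T - kdiff x (\<lambda>T. r * w T) T \<in> I" for T
    using mult_in_I[OF assms(2) w(2)] by (simp add: kdiff_mult_left algebra_simps)
  ultimately show ?thesis unfolding kboundary_def by blast
qed

lemma kboundary_x_mult_kcycle:
  assumes "kcycle S I x n z"
  shows "kboundary S I x n (\<lambda>T. x i * z T)"
proof -
  have z: "kchain S n z" and dz: "\<And>T. kdiff x z T \<in> I"
    using assms by (auto simp: kcycle_def)
  have "kchain S (Suc n) (wedge i z)"
    unfolding kchain_def
  proof (intro allI conjI impI)
    fix T :: "'v set"
    show "wedge i z T \<in> S"
      using ksgn_in_S kchain_in_S[OF z] by (auto simp: wedge_def intro: mult_in_S zero_in_S)
    assume "card T \<noteq> Suc n"
    then have "i \<in> T \<Longrightarrow> card (T - {i}) \<noteq> n"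
      using card_Suc_Diff1[of T i] by auto
    then show "wedge i z T = 0"
      using z by (auto simp: wedge_def kchain_def)
  qed
  moreover have "x i * z T - kdiff x (wedge i z) T \<in> I" for T
  proof -
    have "x i * z T - kdiff x (wedge i z) T = wedge i (kdiff x z) T"
      using kdiff_wedge_add_wedge_kdiff[of x i z T] by (simp add: algebra_simps)
    also have "\<dots> \<in> I"
      unfolding wedge_def using dz ksgn_in_S by (auto intro: mult_in_I zero_in_I)
    finally show ?thesis .
  qed
  ultimately show ?thesis unfolding kboundary_def by blast
qed

text \<open>The polynomial p - p(0) lies in the ideal (x_1, ..., x_m), whose
  elements act on cycles by boundaries.\<close>
lemma kboundary_hom_mult_kcycle_minus_const:
  fixes \<phi> :: "('v, 'k::comm_ring_1) mpoly \<Rightarrow> 'a"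
  assumes z: "kcycle S I x n z"
    and hom_diff: "\<And>p q. \<phi> (p - q) = \<phi> p - \<phi> q"
    and hom_mult: "\<And>p q. \<phi> (p * q) = \<phi> p * \<phi> q"
    and hom_in_S: "\<And>p. \<phi> p \<in> S"
    and hom_Xvar: "\<And>i. \<phi> (Xvar i) = x i"
  shows "kboundary S I x n (\<lambda>T. \<phi> p * z T - \<phi> (Poly_Mapping.single 0 (eval0 p)) * z T)"
proof (induction p rule: poly_mapping_single_add_induct)
  case zero
  show ?case using kboundary_zero by (simp add: eval0_zero)
next
  case (single k a)
  show ?case
  proof (cases "k = 0")
    case True
    then show ?thesis using kboundary_zero by (simp add: eval0_single)
  next
    case False
    then obtain i where i: "Poly_Mapping.lookup k i \<noteq> 0"
      by (metis poly_mapping_eqI lookup_zero)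
    have "\<phi> (Poly_Mapping.single 0 (eval0 (Poly_Mapping.single k a))) = 0"
      using hom_diff[of 0 0] False by (simp add: eval0_single)
    moreover have "\<phi> (Poly_Mapping.single k a) = x i * \<phi> (Poly_Mapping.single (k - Poly_Mapping.single i 1) a)"
      by (simp add: hom_mult hom_Xvar flip: Xvar_mult_single[OF i])
    ultimately have "\<phi> (Poly_Mapping.single k a) * z T
        - \<phi> (Poly_Mapping.single 0 (eval0 (Poly_Mapping.single k a))) * z T
      = \<phi> (Poly_Mapping.single (k - Poly_Mapping.single i 1) a) * (x i * z T)" for T
      by (simp add: mult_ac)
    moreover have "kboundary S I x n
        (\<lambda>T. \<phi> (Poly_Mapping.single (k - Poly_Mapping.single i 1) a) * (x i * z T))"
      by (intro kboundary_mult_left kboundary_x_mult_kcycle z hom_in_S)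
    ultimately show ?thesis by simp
  qed
next
  case (add p q)
  have hom_add: "\<phi> (p + q) = \<phi> p + \<phi> q" for p q
    using hom_diff[of "p + q" q] by simp
  have "\<phi> (p + q) * z T - \<phi> (Poly_Mapping.single 0 (eval0 (p + q))) * z T
    = (\<phi> p * z T - \<phi> (Poly_Mapping.single 0 (eval0 p)) * z T)
      + (\<phi> q * z T - \<phi> (Poly_Mapping.single 0 (eval0 q)) * z T)" for T
    by (simp add: eval0_add single_add hom_add algebra_simps)
  then show ?case using kboundary_add[OF add] by simp
qed

lemma kcycle_homologous_hom_mult:
  fixes \<phi> :: "('v, 'k::comm_ring_1) mpoly \<Rightarrow> 'a"
  assumes z: "kcycle S I x n z"
    and hom_diff: "\<And>p q. \<phi> (p - q) = \<phi> p - \<phi> q"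
    and hom_mult: "\<And>p q. \<phi> (p * q) = \<phi> p * \<phi> q"
    and hom_one: "\<phi> 1 = 1"
    and hom_in_S: "\<And>p. \<phi> p \<in> S"
    and hom_Xvar: "\<And>i. \<phi> (Xvar i) = x i"
    and "eval0 Q = 1"
  shows "kboundary S I x n (\<lambda>T. z T - \<phi> Q * z T)"
proof -
  have "kboundary S I x n (\<lambda>T. -1 * (\<phi> Q * z T - \<phi> (Poly_Mapping.single 0 (eval0 Q)) * z T))"
    by (intro kboundary_mult_left kboundary_hom_mult_kcycle_minus_const assms minus_one_in_S)
  with \<open>eval0 Q = 1\<close> hom_one show ?thesis
    by (simp add: algebra_simps flip: one_poly_mapping.abs_eq)
qed

end

lemma lam_zero: "lam 0 = 0"
  by (simp add: lam_def Zero_fract_def)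

lemma lam_one: "lam 1 = 1"
  by (simp add: lam_def One_fract_def)

lemma lam_add: "lam (p + q) = lam p + lam q"
  by (simp add: lam_def)

lemma lam_uminus: "lam (- p) = - lam p"
  by (simp add: lam_def)

lemma lam_diff: "lam (p - q) = lam p - lam q"
  by (simp add: lam_def)

lemma lam_mult: "lam (p * q) = lam p * lam q"
  by (simp add: lam_def)

lemma lam_power: "lam (p ^ k) = lam p ^ k"
  by (induction k) (auto simp: lam_one lam_mult)

lemma lam_sum: "lam (sum f A) = (\<Sum>a\<in>A. lam (f a))"
  by (induction A rule: infinite_finite_induct) (auto simp: lam_zero lam_add)

lemma lam_eq_0_iff: "lam p = 0 \<longleftrightarrow> p = 0"
  by (simp add: lam_def Zero_fract_def eq_fract)

lemma kdiff_lam: "kdiff (\<lambda>i. lam (x i)) (\<lambda>S. lam (c S)) T = lam (kdiff x c T)"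
  by (simp add: kdiff_def lam_sum lam_mult lam_power lam_uminus lam_one)

lemma lam_kdiff_eq_mult_kdiff:
  assumes "\<And>T. lam Q * f T = lam (p T)"
  shows "lam (kdiff x p T) = lam Q * kdiff (\<lambda>i. lam (x i)) f T"
  by (simp add: kdiff_mult_left flip: kdiff_lam assms)

lemma kchain_UNIV_if_lam_eq_mult:
  assumes "kchain locR n f" "\<And>T. lam Q * f T = lam (p T)"
  shows "kchain UNIV n p"
proof -
  have "p T = 0" if "f T = 0" for T
    using assms(2)[of T] that by (simp add: lam_eq_0_iff)
  then show ?thesis
    using assms(1) by (simp add: kchain_def)
qed

lemma lam_in_locR: "lam (p::('v::linorder, 'k::field) mpoly) \<in> locR"
proof -
  have "eval0 (1::('v, 'k) mpoly) \<noteq> 0"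
    by (simp add: eval0_one)
  then show ?thesis
    unfolding locR_def lam_def by blast
qed

lemma locR_add: "a \<in> locR \<Longrightarrow> b \<in> locR \<Longrightarrow> a + b \<in> locR"
proof -
  assume "a \<in> locR" "b \<in> locR"
  then obtain p q p' q' where "a = Fract p q" "eval0 q \<noteq> 0" "b = Fract p' q'" "eval0 q' \<noteq> 0"
    by (auto simp: locR_def)
  moreover then have "q \<noteq> 0" "q' \<noteq> 0"
    by (auto simp: eval0_zero)
  ultimately show ?thesis unfolding locR_def
    by (intro CollectI exI[of _ "p * q' + p' * q"] exI[of _ "q * q'"]) (simp add: eval0_mult)
qed

lemma locR_mult: "a \<in> locR \<Longrightarrow> b \<in> locR \<Longrightarrow> a * b \<in> locR"
proof -
  assume "a \<in> locR" "b \<in> locR"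
  then obtain p q p' q' where "a = Fract p q" "eval0 q \<noteq> 0" "b = Fract p' q'" "eval0 q' \<noteq> 0"
    by (auto simp: locR_def)
  then show ?thesis unfolding locR_def
    by (intro CollectI exI[of _ "p * p'"] exI[of _ "q * q'"]) (simp add: eval0_mult)
qed

lemma locR_common_denominator:
  fixes f :: "'i::finite \<Rightarrow> ('v::linorder, 'k::field) mpoly fract"
  assumes "\<And>i. f i \<in> locR"
  obtains Q p where "eval0 Q = 1" "\<And>i. lam Q * f i = lam (p i)"
proof -
  have "\<forall>i. \<exists>a b. f i = Fract a b \<and> eval0 b \<noteq> 0"
    using assms unfolding locR_def by blast
  then obtain num den where f: "\<And>i. f i = Fract (num i) (den i)" and den: "\<And>i. eval0 (den i) \<noteq> 0"
    by metis
  define c :: "('v, 'k) mpoly" where "c = Poly_Mapping.single 0 (inverse (\<Prod>i\<in>UNIV. eval0 (den i)))"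
  define Q where "Q = c * (\<Prod>i\<in>UNIV. den i)"
  define p where "p i = c * num i * (\<Prod>j\<in>UNIV - {i}. den j)" for i
  have "eval0 Q = 1"
    using den by (simp add: Q_def c_def eval0_mult eval0_prod eval0_single)
  moreover have "lam Q * f i = lam (p i)" for i
  proof -
    have "den i \<noteq> 0"
      using den[of i] by (auto simp: eval0_zero)
    moreover have "Q = den i * (c * (\<Prod>j\<in>UNIV - {i}. den j))"
      unfolding Q_def by (subst prod.remove[of _ i]) (auto simp: mult_ac)
    ultimately have "lam Q * f i = Fract (den i * p i) (den i * 1)"
      by (simp add: lam_def f p_def mult_ac)
    also have "\<dots> = lam (p i)"
      unfolding lam_def by (rule mult_fract_cancel[OF \<open>den i \<noteq> 0\<close>])
    finally show ?thesis .
  qed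
  ultimately show ?thesis using that by blast
qed

lemma koszul_complex_locR:
  "ideal_of locR I \<Longrightarrow> koszul_complex locR I"
  unfolding koszul_complex_def using lam_in_locR[of 0] lam_in_locR[of 1] lam_in_locR[of "-1"]
  by (auto simp: lam_zero lam_one lam_uminus intro: locR_add locR_mult)

lemma ideal_of_lam_preimage: "ideal_of locR I \<Longrightarrow> ideal_of UNIV {p. lam p \<in> I}"
  using lam_in_locR by (force simp: ideal_of_def lam_zero lam_add lam_mult)

lemma koszul_complex_UNIV: "ideal_of UNIV J \<Longrightarrow> koszul_complex UNIV J"
  unfolding koszul_complex_def by auto

subsection \<open>Comparison of the two Koszul complexes\<close>

lemma kboundary_if_kboundary_lam:
  assumes I: "ideal_of locR I"
    and z: "kcycle UNIV {p. lam p \<in> I} Xvar n z"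
    and z_bounds: "kboundary locR I (\<lambda>i. lam (Xvar i)) n (\<lambda>T. lam (z T))"
  shows "kboundary UNIV {p. lam p \<in> I} Xvar n z"
proof -
  interpret loc: koszul_complex locR I "\<lambda>i. lam (Xvar i)"
    using I by (rule koszul_complex_locR)
  interpret poly: koszul_complex UNIV "{p. lam p \<in> I}" Xvar
    using I by (intro koszul_complex_UNIV ideal_of_lam_preimage)
  obtain w where w: "kchain locR (Suc n) w" "\<And>T. lam (z T) - kdiff (\<lambda>i. lam (Xvar i)) w T \<in> I"
    using z_bounds unfolding kboundary_def by blast
  obtain Q p where Q: "eval0 Q = 1" "\<And>T. lam Q * w T = lam (p T)"
    using locR_common_denominator[of w] loc.kchain_in_S[OF w(1)] by blast
  have "kchain UNIV (Suc n) p"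
    using w(1) Q(2) by (rule kchain_UNIV_if_lam_eq_mult)
  moreover have "lam (Q * z T - kdiff Xvar p T) \<in> I" for T
  proof -
    have "lam (Q * z T - kdiff Xvar p T) = lam Q * (lam (z T) - kdiff (\<lambda>i. lam (Xvar i)) w T)"
      by (simp add: lam_diff lam_mult lam_kdiff_eq_mult_kdiff[OF Q(2)] right_diff_distrib)
    then show ?thesis
      using loc.mult_in_I[OF lam_in_locR w(2)] by simp
  qed
  ultimately have "kboundary UNIV {p. lam p \<in> I} Xvar n (\<lambda>T. Q * z T)"
    unfolding kboundary_def by blast
  moreover have "kboundary UNIV {p. lam p \<in> I} Xvar n (\<lambda>T. z T - Q * z T)"
    by (rule poly.kcycle_homologous_hom_mult[where \<phi> = "\<lambda>p. p"]) (simp_all add: z Q(1))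
  ultimately have "kboundary UNIV {p. lam p \<in> I} Xvar n (\<lambda>T. (z T - Q * z T) + Q * z T)"
    by (intro poly.kboundary_add)
  then show ?thesis
    by simp
qed

lemma kcycle_homologous_to_lam_kcycle:
  assumes I: "ideal_of locR I"
    and z: "kcycle locR I (\<lambda>i. lam (Xvar i)) n z"
  shows "\<exists>z'. kcycle UNIV {p. lam p \<in> I} Xvar n z'
    \<and> kboundary locR I (\<lambda>i. lam (Xvar i)) n (\<lambda>T. z T - lam (z' T))"
proof -
  interpret loc: koszul_complex locR I "\<lambda>i. lam (Xvar i)"
    using I by (rule koszul_complex_locR)
  have z_chain: "kchain locR n z" and dz: "\<And>T. kdiff (\<lambda>i. lam (Xvar i)) z T \<in> I"
    using z by (auto simp: kcycle_def)
  obtain Q p where Q: "eval0 Q = 1" "\<And>T. lam Q * z T = lam (p T)"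
    using locR_common_denominator[of z] loc.kchain_in_S[OF z_chain] by blast
  have "kcycle UNIV {p. lam p \<in> I} Xvar n p"
    unfolding kcycle_def
    using kchain_UNIV_if_lam_eq_mult[OF z_chain Q(2)] loc.mult_in_I[OF lam_in_locR dz]
    by (simp add: lam_kdiff_eq_mult_kdiff[OF Q(2)])
  moreover have "kboundary locR I (\<lambda>i. lam (Xvar i)) n (\<lambda>T. z T - lam Q * z T)"
    by (rule loc.kcycle_homologous_hom_mult)
      (simp_all add: z Q(1) lam_diff lam_mult lam_one lam_in_locR)
  ultimately show ?thesis
    unfolding Q(2) by blast
qed

theorem mainTheorem14:
  fixes I :: "('v::{finite,linorder}, 'k::field) mpoly fract set"
    and Ibar :: "('v, 'k) mpoly set"
  assumes I: "ideal_of locR I"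
    and Ibar: "Ibar = {p. lam p \<in> I}"
  shows "ideal_of UNIV Ibar
    \<and> (\<forall>p q. lam p - lam q \<in> I \<longleftrightarrow> p - q \<in> Ibar)
    \<and> (\<forall>(c::'v set \<Rightarrow> ('v, 'k) mpoly) T. kdiff (\<lambda>i. lam (Xvar i)) (\<lambda>S. lam (c S)) T = lam (kdiff Xvar c T))
    \<and> (\<forall>n z. kcycle UNIV Ibar Xvar n z \<and> kboundary locR I (\<lambda>i. lam (Xvar i)) n (\<lambda>T. lam (z T))
              \<longrightarrow> kboundary UNIV Ibar Xvar n z)
    \<and> (\<forall>n z. kcycle locR I (\<lambda>i. lam (Xvar i)) n z
              \<longrightarrow> (\<exists>z'. kcycle UNIV Ibar Xvar n z'
                     \<and> kboundary locR I (\<lambda>i. lam (Xvar i)) n (\<lambda>T. z T - lam (z' T))))"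
  using ideal_of_lam_preimage[OF I] kboundary_if_kboundary_lam[OF I]
    kcycle_homologous_to_lam_kcycle[OF I]
  unfolding Ibar by (simp add: lam_diff kdiff_lam)

end
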